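(* Let $\lambda=\langle1^{m_1},2^{m_2},\dots,k^{m_k}\rangle$ with all $m_i>0$, $n\ge1$, $x_1,\dots,x_n>0$, $t>0$. For $1\le j\le k$ let $M_j=m_j+\dots+m_k$ and $M_{k+1}=0$. Under the stationary distribution of the mTAZRP of type $\lambda$ on $n$ sites, the expected number of particles of species $j$ at site $1$ is $$\langle\tau^{(j)}_1\rangle=x_1\frac{\partial}{\partial x_1}\log\left(\frac{\widetilde H_{\langle1^{M_j}\rangle}(x_1,\dots,x_n;1,t)}{\widetilde H_{\langle1^{M_{j+1}}\rangle}(x_1,\dots,x_n;1,t)}\right),$$ with $\widetilde H_{\langle1^0\rangle}:=1$.
   Context: mTAZRP: for a partition $\lambda$ and $n\ge1$, sites $1,\dots,n$ on a ring (site $n+1$ is site $1$); a configuration assigns to each site a multiset of species with union the multiset of parts of $\lambda$; if site $j$ has $c$ particles of species $r$ and $d$ of species larger than $r$, a particle of species $r$ jumps from $j$ to $j+1$ at rate $x_j^{-1}t^d(1+t+\dots+t^{c-1})$. $\langle1^{m_1},\dots,k^{m_k}\rangle$ denotes the partition with part $i$ occurring $m_i$ times. Notation: $[a]_t=1+t+\dots+t^{a-1}$, $[a]_t!=\prod_{b\le a}[b]_t$, $\begin{bmatrix}m\\ \eta_1,\dots,\eta_n\end{bmatrix}_t=[m]_t!/\prod_i[\eta_i]_t!$, and $\widetilde H_{\langle1^m\rangle}(x_1,\dots,x_n;1,t)=\sum_{\eta_1+\dots+\eta_n=m,\ \eta_i\ge0}\begin{bmatrix}m\\ \eta_1,\dots,\eta_n\end{bmatrix}_t\prod_i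 x_i^{\eta_i}$. *)

theory Defs
  imports "HOL-Analysis.Analysis"
begin

definition qint :: "nat \<Rightarrow> real \<Rightarrow> real" where
  "qint a t = (\<Sum>i<a. t ^ i)"

definition qfact :: "nat \<Rightarrow> real \<Rightarrow> real" where
  "qfact a t = (\<Prod>b=1..a. qint b t)"

definition qmultinom :: "nat \<Rightarrow> nat \<Rightarrow> (nat \<Rightarrow> nat) \<Rightarrow> real \<Rightarrow> real" where
  "qmultinom n m \<eta> t = qfact m t / (\<Prod>i=1..n. qfact (\<eta> i) t)"

definition compositions :: "nat \<Rightarrow> nat \<Rightarrow> (nat \<Rightarrow> nat) set" where
  "compositions n m = {\<eta> \<in> {1..n} \<rightarrow>\<^sub>E {..m}. (\<Sum>i=1..n. \<eta> i) = m}"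

text \<open>The modified Macdonald polynomial \<open>H~_{<1^m>}(x_1..x_n;1,t)\<close>\<close>
definition Htilde :: "nat \<Rightarrow> nat \<Rightarrow> (nat \<Rightarrow> real) \<Rightarrow> real \<Rightarrow> real" where
  "Htilde n m x t = (\<Sum>\<eta>\<in>compositions n m. qmultinom n m \<eta> t * (\<Prod>i=1..n. x i ^ \<eta> i))"

text \<open>Configurations: c (j,r) = number of particles of species r at site j,
  sites 1..n, species 1..k, species r occurring m r times in total.\<close>
definition configs :: "nat \<Rightarrow> nat \<Rightarrow> (nat \<Rightarrow> nat) \<Rightarrow> (nat \<times> nat \<Rightarrow> nat) set" where
  "configs n k m = {c \<in> ({1..n} \<times> {1..k}) \<rightarrow>\<^sub>E UNIV.
      \<forall>r\<in>{1..k}. (\<Sum>j=1..n. c (j, r)) = m r}"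

definition next_site :: "nat \<Rightarrow> nat \<Rightarrow> nat" where
  "next_site n j = (if j = n then 1 else j + 1)"

definition move :: "nat \<Rightarrow> (nat \<times> nat \<Rightarrow> nat) \<Rightarrow> nat \<Rightarrow> nat \<Rightarrow> (nat \<times> nat \<Rightarrow> nat)" where
  "move n c j r = (c((j, r) := c (j, r) - 1))((next_site n j, r) := (c((j, r) := c (j, r) - 1)) (next_site n j, r) + 1)"

definition jump_rate :: "nat \<Rightarrow> (nat \<Rightarrow> real) \<Rightarrow> real \<Rightarrow> (nat \<times> nat \<Rightarrow> nat) \<Rightarrow> nat \<Rightarrow> nat \<Rightarrow> real" where
  "jump_rate k x t c j r = inverse (x j) * t ^ (\<Sum>s\<in>{r<..k}. c (j, s)) * qint (c (j, r)) t"

definition trans_rate :: "nat \<Rightarrow> nat \<Rightarrow> (nat \<Rightarrow> real) \<Rightarrow> real \<Rightarrow> (nat \<times> nat \<Rightarrow> nat) \<Rightarrow> (nat \<times> nat \<Rightarrow> nat) \<Rightarrow> real" where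
  "trans_rate n k x t c c' =
     (\<Sum>(j, r)\<in>{(j, r) \<in> {1..n} \<times> {1..k}. c (j, r) > 0 \<and> move n c j r = c'}. jump_rate k x t c j r)"

definition stationary :: "nat \<Rightarrow> nat \<Rightarrow> (nat \<Rightarrow> nat) \<Rightarrow> (nat \<Rightarrow> real) \<Rightarrow> real
    \<Rightarrow> ((nat \<times> nat \<Rightarrow> nat) \<Rightarrow> real) \<Rightarrow> bool" where
  "stationary n k m x t \<pi> \<longleftrightarrow>
     (\<forall>c\<in>configs n k m. \<pi> c \<ge> 0) \<and>
     (\<Sum>c\<in>configs n k m. \<pi> c) = 1 \<and>
     (\<forall>c\<in>configs n k m.
        (\<Sum>c'\<in>configs n k m - {c}. \<pi> c' * trans_rate n k x t c' c)
        = \<pi> c * (\<Sum>c'\<in>configs n k m - {c}. trans_rate n k x t c c'))"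

end

theory Submission
  imports Defs
begin

text \<open>Merge all species \<open>\<ge> j\<close> into one. Their jump rates at a site telescope to
  \<open>[c]\<^sub>t / x i\<close>, where \<open>c\<close> is their total number there, so the tail counts evolve as a
  single-species totally asymmetric zero range process on the compositions of \<open>M j\<close>, and their
  law inherits its balance equations. That process is irreducible and, by pairwise balance, has
  the stationary product measure \<open>\<Prod>i. x i ^ \<eta> i / [\<eta> i]\<^sub>t!\<close>; a maximum principle shows it
  is the only one up to a factor. Its total mass is \<open>H~\<^bsub>\<langle>1^M j\<rangle>\<^esub> / [M j]\<^sub>t!\<close>, so the expected
  tail count at site 1 is \<open>x 1 \<cdot> \<partial>/\<partial>(x 1) log H~\<^bsub>\<langle>1^M j\<rangle>\<^esub>\<close>, and species \<open>j\<close> is the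
  difference of two consecutive tails.\<close>

lemma qint_0 [simp]: "qint 0 t = 0"
  by (simp add: qint_def)

lemma qint_Suc: "qint (Suc a) t = qint a t + t ^ a"
  by (simp add: qint_def)

lemma qint_add: "qint (a + b) t = qint a t + t ^ a * qint b t"
  by (induction b) (auto simp: qint_Suc algebra_simps power_add)

lemma qint_nonneg: "t > 0 \<Longrightarrow> qint a t \<ge> 0"
  unfolding qint_def by (rule sum_nonneg) auto

lemma qint_pos: "t > 0 \<Longrightarrow> a > 0 \<Longrightarrow> qint a t > 0"
  unfolding qint_def by (rule sum_pos) auto

lemma qfact_Suc: "qfact (Suc a) t = qfact a t * qint (Suc a) t"
  by (simp add: qfact_def)

lemma qfact_pos: "t > 0 \<Longrightarrow> qfact a t > 0"
  unfolding qfact_def by (rule prod_pos) (auto intro: qint_pos)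

lemma qint_sum_telescope:
  fixes g :: "nat \<Rightarrow> nat"
  assumes "j \<le> k + 1"
  shows "(\<Sum>r=j..k. t ^ (\<Sum>s\<in>{r<..k}. g s) * qint (g r) t) = qint (\<Sum>s=j..k. g s) t"
  using assms
proof (induction "k + 1 - j" arbitrary: j)
  case 0
  then show ?case by simp
next
  case (Suc d)
  then have "{j..k} = insert j {Suc j..k}" and "{j<..k} = {Suc j..k}" by auto
  moreover have "qint (g j + sum g {Suc j..k}) t = qint (sum g {Suc j..k}) t + t ^ sum g {Suc j..k} * qint (g j) t"
    by (metis add.commute qint_add)
  ultimately show ?case using Suc by simp
qed

definition transfer :: "('a \<Rightarrow> nat) \<Rightarrow> 'a \<Rightarrow> 'a \<Rightarrow> 'a \<Rightarrow> nat" where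
  "transfer f a b = (f(a := f a - 1))(b := (f(a := f a - 1)) b + 1)"

lemma transfer_apply:
  "transfer f a b y = (if y = b then (if a = b then f a - 1 else f b) + 1 else if y = a then f a - 1 else f y)"
  by (simp add: transfer_def)

lemma transfer_self: "f a > 0 \<Longrightarrow> transfer f a a = f"
  by (rule ext) (simp add: transfer_apply)

lemma transfer_transfer: "f a > 0 \<Longrightarrow> transfer (transfer f a b) b a = f"
  by (rule ext) (auto simp: transfer_apply)

lemma transfer_target_pos: "transfer f a b b > 0"
  by (simp add: transfer_apply)

lemma transfer_extensional: "f \<in> extensional S \<Longrightarrow> a \<in> S \<Longrightarrow> b \<in> S \<Longrightarrow> transfer f a b \<in> extensional S"
  by (auto simp: extensional_def transfer_apply)

lemma sum_fun_upd_nat: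
  "finite S \<Longrightarrow> a \<in> S \<Longrightarrow> sum (f(a := v)) S + f a = sum f S + (v::nat)"
  by (simp add: sum.remove)

lemma weighted_sum_transfer:
  assumes fin: "finite S" and ab: "a \<in> S" "b \<in> S" "a \<noteq> b" and pos: "f a > 0"
  shows "(\<Sum>y\<in>S. u y * transfer f a b y) + u a = (\<Sum>y\<in>S. u y * f y) + (u b :: nat)"
proof -
  let ?F = "\<lambda>y. u y * f y"
  let ?F' = "?F(a := u a * (f a - 1))"
  have eq: "(\<lambda>y. u y * transfer f a b y) = ?F'(b := u b * (f b + 1))"
    using ab by (auto simp: transfer_apply)
  have "sum (?F'(b := u b * (f b + 1))) S + ?F' b = sum ?F' S + u b * (f b + 1)"
    using sum_fun_upd_nat[OF fin ab(2)] by metis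
  moreover have "sum ?F' S + ?F a = sum ?F S + u a * (f a - 1)"
    using sum_fun_upd_nat[OF fin ab(1)] by metis
  moreover have "u a * f a = u a * (f a - 1) + u a" using pos by (cases "f a") auto
  ultimately show ?thesis unfolding eq using ab(3) by (simp add: algebra_simps)
qed

lemma sum_transfer:
  assumes "finite S" "a \<in> S" "b \<in> S" "f a > 0"
  shows "sum (transfer f a b) S = sum f S"
proof (cases "a = b")
  case True
  then show ?thesis using assms by (simp add: transfer_self)
next
  case False
  then show ?thesis using weighted_sum_transfer[where u="\<lambda>_. 1"] assms False by simp
qed

lemma next_site_in: "i \<in> {1..n} \<Longrightarrow> next_site n i \<in> {1..n}"
  by (auto simp: next_site_def)

lemma bij_betw_next_site: "bij_betw (next_site n) {1..n} {1..n}"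
  by (rule bij_betw_byWitness[where f'="\<lambda>j. if j = 1 then n else j - 1"])
     (auto simp: next_site_def)

lemma move_eq_transfer: "move n c j r = transfer c (j, r) (next_site n j, r)"
  by (simp add: move_def transfer_def)

lemma finite_configs: "finite (configs n k m)"
proof (rule finite_subset)
  show "configs n k m \<subseteq> ({1..n} \<times> {1..k}) \<rightarrow>\<^sub>E {..(\<Sum>r=1..k. m r)}"
  proof
    fix c assume c: "c \<in> configs n k m"
    have "c (i, r) \<le> (\<Sum>r=1..k. m r)" if "i \<in> {1..n}" "r \<in> {1..k}" for i r
    proof -
      have "c (i, r) \<le> (\<Sum>j=1..n. c (j, r))"
        using that by (intro member_le_sum) auto
      also have "\<dots> = m r" using c that unfolding configs_def by auto
      also have "\<dots> \<le> (\<Sum>r=1..k. m r)" using that by (intro member_le_sum) auto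
      finally show ?thesis .
    qed
    then show "c \<in> ({1..n} \<times> {1..k}) \<rightarrow>\<^sub>E {..(\<Sum>r=1..k. m r)}"
      using c unfolding configs_def by (auto simp: PiE_iff)
  qed
qed (auto intro!: finite_PiE)

lemma move_in_configs:
  assumes c: "c \<in> configs n k m" and i: "i \<in> {1..n}" and r: "r \<in> {1..k}" and pos: "c (i, r) > 0"
  shows "move n c i r \<in> configs n k m"
proof -
  have "c \<in> extensional ({1..n} \<times> {1..k})" using c unfolding configs_def by (auto simp: PiE_iff)
  then have "move n c i r \<in> extensional ({1..n} \<times> {1..k})"
    unfolding move_eq_transfer using i r by (intro transfer_extensional) (auto simp: next_site_def)
  moreover have "(\<Sum>j=1..n. move n c i r (j, r')) = (\<Sum>j=1..n. c (j, r'))" for r'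
  proof (cases "r' = r")
    case True
    have "(\<lambda>j. move n c i r (j, r)) = transfer (\<lambda>j. c (j, r)) i (next_site n i)"
      by (auto simp: move_eq_transfer transfer_apply)
    then have "(\<Sum>j=1..n. move n c i r (j, r)) = sum (transfer (\<lambda>j. c (j, r)) i (next_site n i)) {1..n}"
      by (simp only:)
    also have "\<dots> = (\<Sum>j=1..n. c (j, r))"
      using i pos by (intro sum_transfer) (auto simp: next_site_def)
    finally show ?thesis using True by simp
  qed (auto simp: move_eq_transfer transfer_apply)
  ultimately show ?thesis using c unfolding configs_def by (auto simp: PiE_iff extensional_def)
qed

definition mtazrp_generator ::
    "nat \<Rightarrow> nat \<Rightarrow> (nat \<Rightarrow> real) \<Rightarrow> real \<Rightarrow> ((nat \<times> nat \<Rightarrow> nat) \<Rightarrow> real) \<Rightarrow> (nat \<times> nat \<Rightarrow> nat) \<Rightarrow> real" where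
  "mtazrp_generator n k x t F c =
     (\<Sum>i=1..n. \<Sum>r=1..k. jump_rate k x t c i r * (F (move n c i r) - F c))"

lemma jump_rate_eq_0: "c (j, r) = 0 \<Longrightarrow> jump_rate k x t c j r = 0"
  by (simp add: jump_rate_def)

lemma trans_rate_sum_eq_mtazrp_generator:
  assumes c: "c \<in> configs n k m"
  shows "(\<Sum>c'\<in>configs n k m - {c}. trans_rate n k x t c c' * (F c' - F c)) = mtazrp_generator n k x t F c"
proof -
  let ?C = "configs n k m"
  let ?mv = "\<lambda>p. move n c (fst p) (snd p)"
  let ?h = "\<lambda>p. jump_rate k x t c (fst p) (snd p) * (F (?mv p) - F c)"
  let ?T = "{p \<in> {1..n} \<times> {1..k}. c p > 0}"
  let ?T' = "{p \<in> ?T. ?mv p \<in> ?C - {c}}"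
  have "(\<Sum>c'\<in>?C - {c}. trans_rate n k x t c c' * (F c' - F c)) = (\<Sum>c'\<in>?C - {c}. \<Sum>p\<in>{p\<in>?T'. ?mv p = c'}. ?h p)"
  proof (rule sum.cong[OF refl])
    fix c' assume c': "c' \<in> ?C - {c}"
    have "trans_rate n k x t c c' = (\<Sum>p\<in>{p\<in>?T. ?mv p = c'}. jump_rate k x t c (fst p) (snd p))"
      unfolding trans_rate_def by (rule sum.cong) auto
    then show "trans_rate n k x t c c' * (F c' - F c) = (\<Sum>p\<in>{p\<in>?T'. ?mv p = c'}. ?h p)"
      using c' by (simp add: sum_distrib_right) (intro sum.cong, auto)
  qed
  also have "\<dots> = sum ?h ?T'"
    by (rule sum.group) (auto simp: finite_configs)
  also have "\<dots> = sum ?h ?T"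
  proof (rule sum.mono_neutral_left)
    show "\<forall>p\<in>?T - ?T'. ?h p = 0"
      using move_in_configs[OF c] by auto
  qed auto
  also have "\<dots> = sum ?h ({1..n} \<times> {1..k})"
    by (rule sum.mono_neutral_left) (auto simp: jump_rate_eq_0)
  also have "\<dots> = mtazrp_generator n k x t F c"
    by (simp add: mtazrp_generator_def sum.cartesian_product split_def)
  finally show ?thesis .
qed

text \<open>Multiply the global balance equation at \<open>c\<close> by \<open>F c\<close> and sum over \<open>c\<close>.\<close>
lemma stationary_mtazrp_generator:
  assumes "stationary n k m x t \<pi>"
  shows "(\<Sum>c\<in>configs n k m. \<pi> c * mtazrp_generator n k x t F c) = 0"
proof -
  let ?C = "configs n k m"
  let ?R = "trans_rate n k x t"
  have off_diag: "(\<Sum>c'\<in>?C - {c}. g c') = (\<Sum>c'\<in>?C. if c' \<noteq> c then g c' else 0)"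
    and off_diag': "(\<Sum>c'\<in>?C - {c}. g c') = (\<Sum>c'\<in>?C. if c \<noteq> c' then g c' else 0)" for g c
    by (rule sum.mono_neutral_cong_left; auto simp: finite_configs)+
  have "(\<Sum>c\<in>?C. \<pi> c * (\<Sum>c'\<in>?C - {c}. ?R c c' * F c'))
      = (\<Sum>c\<in>?C. \<Sum>c'\<in>?C. if c' \<noteq> c then \<pi> c * ?R c c' * F c' else 0)"
    by (simp add: off_diag sum_distrib_left mult.assoc if_distrib cong: if_cong)
  also have "\<dots> = (\<Sum>c'\<in>?C. \<Sum>c\<in>?C. if c' \<noteq> c then \<pi> c * ?R c c' * F c' else 0)"
    by (rule sum.swap)
  also have "\<dots> = (\<Sum>c'\<in>?C. (\<Sum>c\<in>?C - {c'}. \<pi> c * ?R c c') * F c')"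
    by (auto simp: off_diag' sum_distrib_right intro!: sum.cong)
  also have "\<dots> = (\<Sum>c'\<in>?C. \<pi> c' * (\<Sum>c\<in>?C - {c'}. ?R c' c) * F c')"
    using assms unfolding stationary_def by simp
  finally have "(\<Sum>c\<in>?C. \<pi> c * (\<Sum>c'\<in>?C - {c}. ?R c c' * (F c' - F c))) = 0"
    by (simp add: right_diff_distrib sum_subtractf sum_distrib_right sum_distrib_left mult.assoc)
  then show ?thesis
    by (simp add: trans_rate_sum_eq_mtazrp_generator cong: sum.cong)
qed

lemma finite_compositions: "finite (compositions n N)"
  unfolding compositions_def
  by (rule finite_subset[of _ "{1..n} \<rightarrow>\<^sub>E {..N}"]) (auto intro!: finite_PiE)

lemma transfer_in_compositions:
  assumes e: "\<eta> \<in> compositions n N" and ab: "a \<in> {1..n}" "b \<in> {1..n}" and pos: "\<eta> a > 0"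
  shows "transfer \<eta> a b \<in> compositions n N"
proof -
  have ext: "\<eta> \<in> extensional {1..n}" using e unfolding compositions_def by (auto simp: PiE_iff)
  have s: "sum (transfer \<eta> a b) {1..n} = N"
    using sum_transfer[of "{1..n}" a b \<eta>] ab pos e unfolding compositions_def by auto
  have "transfer \<eta> a b y \<le> N" if "y \<in> {1..n}" for y
    using member_le_sum[of y "{1..n}" "transfer \<eta> a b"] s that by simp
  then show ?thesis
    using transfer_extensional[OF ext ab] s unfolding compositions_def by (auto simp: PiE_iff)
qed

definition zrp_rate :: "(nat \<Rightarrow> real) \<Rightarrow> real \<Rightarrow> (nat \<Rightarrow> nat) \<Rightarrow> nat \<Rightarrow> real" where
  "zrp_rate x t \<eta> i = qint (\<eta> i) t / x i"

definition zrp_jump :: "nat \<Rightarrow> (nat \<Rightarrow> nat) \<Rightarrow> nat \<Rightarrow> nat \<Rightarrow> nat" where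
  "zrp_jump n \<eta> i = transfer \<eta> i (next_site n i)"

definition zrp_generator :: "nat \<Rightarrow> (nat \<Rightarrow> real) \<Rightarrow> real \<Rightarrow> ((nat \<Rightarrow> nat) \<Rightarrow> real) \<Rightarrow> (nat \<Rightarrow> nat) \<Rightarrow> real" where
  "zrp_generator n x t f \<eta> = (\<Sum>i=1..n. zrp_rate x t \<eta> i * (f (zrp_jump n \<eta> i) - f \<eta>))"

lemma zrp_rate_eq_0: "\<eta> i = 0 \<Longrightarrow> zrp_rate x t \<eta> i = 0"
  by (simp add: zrp_rate_def)

lemma zrp_rate_nonneg: "x i > 0 \<Longrightarrow> t > 0 \<Longrightarrow> zrp_rate x t \<eta> i \<ge> 0"
  unfolding zrp_rate_def by (auto intro!: divide_nonneg_pos qint_nonneg)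

lemma zrp_rate_pos: "x i > 0 \<Longrightarrow> t > 0 \<Longrightarrow> \<eta> i > 0 \<Longrightarrow> zrp_rate x t \<eta> i > 0"
  unfolding zrp_rate_def by (auto intro!: divide_pos_pos qint_pos)

lemma zrp_jump_in_compositions:
  "\<eta> \<in> compositions n N \<Longrightarrow> i \<in> {1..n} \<Longrightarrow> \<eta> i > 0 \<Longrightarrow> zrp_jump n \<eta> i \<in> compositions n N"
  unfolding zrp_jump_def by (rule transfer_in_compositions) (auto simp: next_site_def)

definition tail_counts :: "nat \<Rightarrow> nat \<Rightarrow> nat \<Rightarrow> (nat \<times> nat \<Rightarrow> nat) \<Rightarrow> nat \<Rightarrow> nat" where
  "tail_counts n k j c = (\<lambda>i\<in>{1..n}. \<Sum>r=j..k. c (i, r))"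

lemma tail_counts_in_compositions:
  assumes c: "c \<in> configs n k m" and j: "1 \<le> j"
  shows "tail_counts n k j c \<in> compositions n (\<Sum>l=j..k. m l)"
proof -
  have "(\<Sum>i=1..n. tail_counts n k j c i) = (\<Sum>i=1..n. \<Sum>r=j..k. c (i, r))"
    by (simp add: tail_counts_def)
  also have "\<dots> = (\<Sum>r=j..k. \<Sum>i=1..n. c (i, r))"
    by (rule sum.swap)
  also have "\<dots> = (\<Sum>l=j..k. m l)"
    using c j unfolding configs_def by (intro sum.cong) auto
  finally have s: "(\<Sum>i=1..n. tail_counts n k j c i) = (\<Sum>l=j..k. m l)" .
  moreover have "tail_counts n k j c i \<le> (\<Sum>l=j..k. m l)" if "i \<in> {1..n}" for i
    using member_le_sum[of i "{1..n}" "tail_counts n k j c"] s that by simp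
  ultimately show ?thesis unfolding compositions_def by (auto simp: tail_counts_def PiE_iff)
qed

lemma tail_counts_Suc:
  "i \<in> {1..n} \<Longrightarrow> j \<le> k \<Longrightarrow> tail_counts n k j c i = c (i, j) + tail_counts n k (Suc j) c i"
  by (simp add: tail_counts_def sum.atLeast_Suc_atMost)

lemma tail_counts_move_lower:
  "r < j \<Longrightarrow> tail_counts n k j (move n c i r) = tail_counts n k j c"
  unfolding tail_counts_def
  by (intro ext) (auto simp: move_eq_transfer transfer_apply intro!: sum.cong)

lemma tail_counts_move:
  assumes i: "i \<in> {1..n}" and r: "r \<in> {j..k}" and pos: "c (i, r) > 0"
  shows "tail_counts n k j (move n c i r) = zrp_jump n (tail_counts n k j c) i"
proof
  fix p
  show "tail_counts n k j (move n c i r) p = zrp_jump n (tail_counts n k j c) i p"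
  proof (cases "p \<in> {1..n}")
    case False
    then have "p \<noteq> i" "p \<noteq> next_site n i" using i next_site_in[OF i] by auto
    then show ?thesis using False by (auto simp: tail_counts_def zrp_jump_def transfer_apply)
  next
    case True
    let ?g = "\<lambda>r'. c (p, r')"
    let ?v = "transfer (\<lambda>q. c (q, r)) i (next_site n i) p"
    have "(\<lambda>r'. move n c i r (p, r')) = ?g(r := ?v)"
      by (auto simp: move_eq_transfer transfer_apply)
    then have "(\<Sum>r'=j..k. move n c i r (p, r')) + ?g r = sum ?g {j..k} + ?v"
      using r sum_fun_upd_nat[of "{j..k}" r ?g ?v] by (simp only:) simp
    moreover have "?g r \<le> sum ?g {j..k}" "c (i, r) \<le> (\<Sum>r'=j..k. c (i, r'))"
      using r by (intro member_le_sum; simp)+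
    ultimately show ?thesis using True pos i
      by (auto simp: tail_counts_def zrp_jump_def transfer_apply split: if_splits)
  qed
qed

text \<open>Jumps of species below \<open>j\<close> leave the tail counts unchanged, while the rates of the
  species \<open>j..k\<close> at a site telescope to the single-species rate of their total number.\<close>
lemma mtazrp_generator_tail_counts:
  assumes j: "1 \<le> j" "j \<le> k + 1"
  shows "mtazrp_generator n k x t (f \<circ> tail_counts n k j) c = zrp_generator n x t f (tail_counts n k j c)"
  unfolding mtazrp_generator_def zrp_generator_def
proof (rule sum.cong[OF refl])
  fix i assume i: "i \<in> {1..n}"
  let ?\<eta> = "tail_counts n k j c"
  let ?D = "f (zrp_jump n ?\<eta> i) - f ?\<eta>"
  have "(\<Sum>r=1..k. jump_rate k x t c i r * ((f \<circ> tail_counts n k j) (move n c i r) - (f \<circ> tail_counts n k j) c))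
      = (\<Sum>r=j..k. jump_rate k x t c i r * ?D)"
  proof (rule sum.mono_neutral_cong_right)
    fix r assume r: "r \<in> {j..k}"
    show "jump_rate k x t c i r * ((f \<circ> tail_counts n k j) (move n c i r) - (f \<circ> tail_counts n k j) c)
        = jump_rate k x t c i r * ?D"
      using tail_counts_move[OF i r] by (cases "c (i, r) = 0") (auto simp: jump_rate_eq_0)
  qed (use j in \<open>auto simp: tail_counts_move_lower\<close>)
  also have "\<dots> = inverse (x i) * (\<Sum>r=j..k. t ^ (\<Sum>s\<in>{r<..k}. c (i, s)) * qint (c (i, r)) t) * ?D"
    by (simp add: jump_rate_def sum_distrib_left sum_distrib_right mult.assoc)
  also have "\<dots> = zrp_rate x t ?\<eta> i * ?D"
    using qint_sum_telescope[OF j(2), of t "\<lambda>r. c (i, r)"] i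
    by (simp add: zrp_rate_def tail_counts_def divide_inverse mult.commute)
  finally show "(\<Sum>r=1..k. jump_rate k x t c i r * ((f \<circ> tail_counts n k j) (move n c i r) - (f \<circ> tail_counts n k j) c))
      = zrp_rate x t ?\<eta> i * ?D" .
qed

definition tail_law :: "nat \<Rightarrow> nat \<Rightarrow> (nat \<Rightarrow> nat) \<Rightarrow> nat \<Rightarrow> ((nat \<times> nat \<Rightarrow> nat) \<Rightarrow> real) \<Rightarrow> (nat \<Rightarrow> nat) \<Rightarrow> real" where
  "tail_law n k m j \<pi> \<eta> = (\<Sum>c\<in>{c\<in>configs n k m. tail_counts n k j c = \<eta>}. \<pi> c)"

lemma sum_configs_tail_law:
  assumes "1 \<le> j"
  shows "(\<Sum>c\<in>configs n k m. \<pi> c * G (tail_counts n k j c)) =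
         (\<Sum>\<eta>\<in>compositions n (\<Sum>l=j..k. m l). tail_law n k m j \<pi> \<eta> * G \<eta>)"
proof -
  have "(\<Sum>c\<in>configs n k m. \<pi> c * G (tail_counts n k j c)) =
    (\<Sum>\<eta>\<in>compositions n (\<Sum>l=j..k. m l). \<Sum>c\<in>{c\<in>configs n k m. tail_counts n k j c = \<eta>}. \<pi> c * G (tail_counts n k j c))"
    by (rule sum.group[symmetric])
       (use finite_configs finite_compositions tail_counts_in_compositions assms in auto)
  also have "\<dots> = (\<Sum>\<eta>\<in>compositions n (\<Sum>l=j..k. m l). tail_law n k m j \<pi> \<eta> * G \<eta>)"
    unfolding tail_law_def sum_distrib_right by (intro sum.cong) auto
  finally show ?thesis .
qed

lemma tail_law_zrp_generator:
  assumes "stationary n k m x t \<pi>" and "1 \<le> j" "j \<le> k + 1"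
  shows "(\<Sum>\<eta>\<in>compositions n (\<Sum>l=j..k. m l). tail_law n k m j \<pi> \<eta> * zrp_generator n x t f \<eta>) = 0"
  using stationary_mtazrp_generator[OF assms(1), of "f \<circ> tail_counts n k j"]
  by (simp add: mtazrp_generator_tail_counts[OF assms(2,3)] sum_configs_tail_law[OF assms(2)])

definition zrp_weight :: "nat \<Rightarrow> (nat \<Rightarrow> real) \<Rightarrow> real \<Rightarrow> (nat \<Rightarrow> nat) \<Rightarrow> real" where
  "zrp_weight n x t \<eta> = (\<Prod>i=1..n. x i ^ \<eta> i / qfact (\<eta> i) t)"

lemma zrp_weight_pos: "\<forall>i\<in>{1..n}. x i > 0 \<Longrightarrow> t > 0 \<Longrightarrow> zrp_weight n x t \<eta> > 0"
  unfolding zrp_weight_def by (rule prod_pos) (auto intro!: divide_pos_pos qfact_pos)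

text \<open>This pairwise balance is what makes the product weight stationary.\<close>
lemma zrp_weight_pairwise_balance:
  assumes x: "\<forall>i\<in>{1..n}. x i > 0" and t: "t > 0" and i: "i \<in> {1..n}" and pos: "\<eta> i > 0"
  shows "zrp_weight n x t \<eta> * zrp_rate x t \<eta> i
       = zrp_weight n x t (zrp_jump n \<eta> i) * zrp_rate x t (zrp_jump n \<eta> i) (next_site n i)"
proof (cases "next_site n i = i")
  case True
  then show ?thesis using pos by (simp add: zrp_jump_def transfer_self)
next
  case False
  let ?b = "next_site n i"
  let ?\<eta>' = "zrp_jump n \<eta> i"
  have b: "?b \<in> {1..n}" using next_site_in[OF i] .
  define g where "g \<eta> p = x p ^ \<eta> p / qfact (\<eta> p) t" for \<eta> p
  have split: "zrp_weight n x t \<eta> = g \<eta> i * g \<eta> ?b * prod (g \<eta>) ({1..n} - {i} - {?b})" for \<eta>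
  proof -
    have "zrp_weight n x t \<eta> = g \<eta> i * prod (g \<eta>) ({1..n} - {i})"
      unfolding zrp_weight_def g_def using i by (simp add: prod.remove)
    also have "prod (g \<eta>) ({1..n} - {i}) = g \<eta> ?b * prod (g \<eta>) ({1..n} - {i} - {?b})"
      using b False by (intro prod.remove) auto
    finally show ?thesis by simp
  qed
  have rest: "prod (g \<eta>) ({1..n} - {i} - {?b}) = prod (g ?\<eta>') ({1..n} - {i} - {?b})"
    by (intro prod.cong) (auto simp: g_def zrp_jump_def transfer_apply)
  obtain a where a: "\<eta> i = Suc a" using pos by (cases "\<eta> i") auto
  have "?\<eta>' i = a" "?\<eta>' ?b = Suc (\<eta> ?b)" using False a by (simp_all add: zrp_jump_def transfer_apply)
  moreover have "x i > 0" "x ?b > 0" using x i b by auto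
  moreover have "qfact a t > 0" "qfact (\<eta> ?b) t > 0" "qint (Suc a) t > 0" "qint (Suc (\<eta> ?b)) t > 0"
    using qfact_pos qint_pos t by auto
  ultimately show ?thesis
    unfolding split[of \<eta>] split[of ?\<eta>'] rest
    by (simp add: g_def zrp_rate_def a qfact_Suc field_simps)
qed

lemma zrp_weight_inflow:
  assumes x: "\<forall>i\<in>{1..n}. x i > 0" and t: "t > 0" and i: "i \<in> {1..n}"
  shows "(\<Sum>\<eta>\<in>compositions n N. zrp_weight n x t \<eta> * zrp_rate x t \<eta> i * f (zrp_jump n \<eta> i)) =
         (\<Sum>\<eta>\<in>compositions n N. zrp_weight n x t \<eta> * zrp_rate x t \<eta> (next_site n i) * f \<eta>)"
proof -
  let ?Z = "compositions n N"
  let ?w = "zrp_weight n x t"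
  let ?b = "next_site n i"
  have b: "?b \<in> {1..n}" using next_site_in[OF i] .
  have bij: "bij_betw (\<lambda>\<eta>. zrp_jump n \<eta> i) {\<eta>\<in>?Z. \<eta> i > 0} {\<eta>\<in>?Z. \<eta> ?b > 0}"
    by (rule bij_betw_byWitness[where f'="\<lambda>\<eta>. transfer \<eta> ?b i"])
       (use i b in \<open>auto simp: zrp_jump_def transfer_transfer transfer_target_pos
          intro!: transfer_in_compositions zrp_jump_in_compositions[unfolded zrp_jump_def]\<close>)
  have "(\<Sum>\<eta>\<in>?Z. ?w \<eta> * zrp_rate x t \<eta> i * f (zrp_jump n \<eta> i)) =
        (\<Sum>\<eta>\<in>{\<eta>\<in>?Z. \<eta> i > 0}. ?w \<eta> * zrp_rate x t \<eta> i * f (zrp_jump n \<eta> i))"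
    by (rule sum.mono_neutral_right) (auto simp: finite_compositions zrp_rate_eq_0)
  also have "\<dots> = (\<Sum>\<eta>\<in>{\<eta>\<in>?Z. \<eta> i > 0}. (\<lambda>\<eta>'. ?w \<eta>' * zrp_rate x t \<eta>' ?b * f \<eta>') (zrp_jump n \<eta> i))"
    using zrp_weight_pairwise_balance[OF x t i] by (intro sum.cong) auto
  also have "\<dots> = (\<Sum>\<eta>\<in>{\<eta>\<in>?Z. \<eta> ?b > 0}. ?w \<eta> * zrp_rate x t \<eta> ?b * f \<eta>)"
    by (rule sum.reindex_bij_betw[OF bij])
  also have "\<dots> = (\<Sum>\<eta>\<in>?Z. ?w \<eta> * zrp_rate x t \<eta> ?b * f \<eta>)"
    by (rule sum.mono_neutral_left) (auto simp: finite_compositions zrp_rate_eq_0)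
  finally show ?thesis .
qed

lemma zrp_weight_generator:
  assumes x: "\<forall>i\<in>{1..n}. x i > 0" and t: "t > 0"
  shows "(\<Sum>\<eta>\<in>compositions n N. zrp_weight n x t \<eta> * zrp_generator n x t f \<eta>) = 0"
proof -
  let ?Z = "compositions n N"
  let ?w = "zrp_weight n x t"
  have "(\<Sum>\<eta>\<in>?Z. ?w \<eta> * (\<Sum>i=1..n. zrp_rate x t \<eta> i * f (zrp_jump n \<eta> i))) =
        (\<Sum>i=1..n. \<Sum>\<eta>\<in>?Z. ?w \<eta> * zrp_rate x t \<eta> i * f (zrp_jump n \<eta> i))"
    by (simp add: sum_distrib_left sum.swap[of _ ?Z] mult.assoc)
  also have "\<dots> = (\<Sum>i=1..n. \<Sum>\<eta>\<in>?Z. ?w \<eta> * zrp_rate x t \<eta> (next_site n i) * f \<eta>)"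
    using zrp_weight_inflow[OF x t] by simp
  also have "\<dots> = (\<Sum>\<eta>\<in>?Z. ?w \<eta> * f \<eta> * (\<Sum>i=1..n. zrp_rate x t \<eta> (next_site n i)))"
    by (simp add: sum_distrib_left mult_ac) (rule sum.swap)
  also have "\<dots> = (\<Sum>\<eta>\<in>?Z. ?w \<eta> * f \<eta> * (\<Sum>i=1..n. zrp_rate x t \<eta> i))"
    using sum.reindex_bij_betw[OF bij_betw_next_site, of "zrp_rate x t _"] by simp
  finally show ?thesis
    by (simp add: zrp_generator_def right_diff_distrib sum_subtractf sum_distrib_left mult_ac)
qed

definition first_site_config :: "nat \<Rightarrow> nat \<Rightarrow> nat \<Rightarrow> nat" where
  "first_site_config n N = (\<lambda>p\<in>{1..n}. if p = 1 then N else 0)"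

definition zrp_step :: "nat \<Rightarrow> nat \<Rightarrow> (nat \<Rightarrow> nat) \<Rightarrow> (nat \<Rightarrow> nat) \<Rightarrow> bool" where
  "zrp_step n N \<eta> \<eta>' \<longleftrightarrow> \<eta> \<in> compositions n N \<and> (\<exists>i\<in>{1..n}. \<eta> i > 0 \<and> zrp_jump n \<eta> i = \<eta>')"

lemma first_site_config_in_compositions: "n \<ge> 1 \<Longrightarrow> first_site_config n N \<in> compositions n N"
  unfolding compositions_def
  by (auto simp: first_site_config_def sum.mono_neutral_right[of "{1..n}" "{1}"])

lemma eq_first_site_config:
  assumes e: "\<eta> \<in> compositions n N" and n: "n \<ge> 1" and z: "\<forall>p\<in>{2..n}. \<eta> p = 0"
  shows "\<eta> = first_site_config n N"
proof
  fix p
  have ext: "\<eta> \<in> extensional {1..n}" using e unfolding compositions_def by (auto simp: PiE_iff)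
  have "N = (\<Sum>p=1..n. \<eta> p)" using e unfolding compositions_def by auto
  also have "\<dots> = (\<Sum>p\<in>{1}. \<eta> p)"
    by (rule sum.mono_neutral_right) (use n z in auto)
  finally have "\<eta> 1 = N" by simp
  then show "\<eta> p = first_site_config n N p"
    using ext z by (cases "p \<in> {1..n}") (auto simp: first_site_config_def extensional_def)
qed

text \<open>Moving a particle forward from a site \<open>p \<ge> 2\<close> strictly decreases the potential
  \<open>\<Sum>y\<ge>2. (n + 1 - y) * \<eta> y\<close>.\<close>
lemma zrp_reaches_first_site_config:
  assumes n: "n \<ge> 1"
  shows "\<eta> \<in> compositions n N \<Longrightarrow> (zrp_step n N)\<^sup>*\<^sup>* \<eta> (first_site_config n N)"
proof (induction "\<Sum>y=1..n. (if y = 1 then 0 else n + 1 - y) * \<eta> y" arbitrary: \<eta> rule: less_induct)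
  case less
  let ?u = "\<lambda>y::nat. if y = 1 then 0 else n + 1 - y"
  show ?case
  proof (cases "\<forall>p\<in>{2..n}. \<eta> p = 0")
    case True
    then show ?thesis using eq_first_site_config[OF less.prems n] by simp
  next
    case False
    then obtain p where p: "p \<in> {2..n}" "\<eta> p > 0" by auto
    let ?q = "next_site n p"
    have pin: "p \<in> {1..n}" using p by auto
    have "(\<Sum>y=1..n. ?u y * transfer \<eta> p ?q y) + ?u p = (\<Sum>y=1..n. ?u y * \<eta> y) + ?u ?q"
      by (rule weighted_sum_transfer) (use p next_site_in[OF pin] in \<open>auto simp: next_site_def\<close>)
    moreover have "?u ?q < ?u p" using p by (auto simp: next_site_def)
    ultimately have "(zrp_step n N)\<^sup>*\<^sup>* (zrp_jump n \<eta> p) (first_site_config n N)"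
      using less.prems pin p by (intro less.hyps) (auto simp: zrp_jump_def intro: zrp_jump_in_compositions[unfolded zrp_jump_def])
    moreover have "zrp_step n N \<eta> (zrp_jump n \<eta> p)" using less.prems pin p unfolding zrp_step_def by auto
    ultimately show ?thesis by (metis converse_rtranclp_into_rtranclp)
  qed
qed

text \<open>Induction on \<open>\<Sum>y. (y - 1) * \<eta> y\<close>: undo a forward move from site \<open>p - 1\<close> to \<open>p\<close>.\<close>
lemma first_site_config_zrp_reaches:
  assumes n: "n \<ge> 1"
  shows "\<eta> \<in> compositions n N \<Longrightarrow> (zrp_step n N)\<^sup>*\<^sup>* (first_site_config n N) \<eta>"
proof (induction "\<Sum>y=1..n. (y - 1) * \<eta> y" arbitrary: \<eta> rule: less_induct)
  case less
  show ?case
  proof (cases "\<forall>p\<in>{2..n}. \<eta> p = 0")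
    case True
    then show ?thesis using eq_first_site_config[OF less.prems n] by simp
  next
    case False
    then obtain p where p: "p \<in> {2..n}" "\<eta> p > 0" by auto
    let ?q = "p - 1"
    let ?\<eta> = "transfer \<eta> p ?q"
    have pq: "p \<in> {1..n}" "?q \<in> {1..n}" "p \<noteq> ?q" using p by auto
    have "(\<Sum>y=1..n. (y - 1) * ?\<eta> y) + (p - 1) = (\<Sum>y=1..n. (y - 1) * \<eta> y) + (?q - 1)"
      by (rule weighted_sum_transfer) (use pq p in auto)
    moreover have inZ: "?\<eta> \<in> compositions n N"
      by (rule transfer_in_compositions) (use less.prems pq p in auto)
    ultimately have "(zrp_step n N)\<^sup>*\<^sup>* (first_site_config n N) ?\<eta>"
      using p by (intro less.hyps) auto
    moreover have "zrp_step n N ?\<eta> \<eta>"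
      unfolding zrp_step_def using inZ pq p transfer_target_pos[of \<eta> p ?q] transfer_transfer[of \<eta> p ?q]
      by (auto simp: zrp_jump_def next_site_def intro!: bexI[of _ ?q])
    ultimately show ?thesis by (metis rtranclp.rtrancl_into_rtrancl)
  qed
qed

lemma zrp_inflow_eq_outflow:
  assumes gen: "(\<Sum>\<eta>\<in>compositions n N. \<nu> \<eta> * zrp_generator n x t (\<lambda>\<eta>. if \<eta> = \<eta>0 then 1 else 0) \<eta>) = 0"
    and \<eta>0: "\<eta>0 \<in> compositions n N"
  shows "(\<Sum>\<eta>\<in>compositions n N. \<nu> \<eta> * (\<Sum>i=1..n. zrp_rate x t \<eta> i * (if zrp_jump n \<eta> i = \<eta>0 then 1 else 0)))
       = \<nu> \<eta>0 * (\<Sum>i=1..n. zrp_rate x t \<eta>0 i)"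
proof -
  let ?Z = "compositions n N"
  let ?In = "\<lambda>\<eta>. \<Sum>i=1..n. zrp_rate x t \<eta> i * (if zrp_jump n \<eta> i = \<eta>0 then 1 else 0)"
  let ?Out = "\<lambda>\<eta>. \<Sum>i=1..n. zrp_rate x t \<eta> i"
  have "\<nu> \<eta> * zrp_generator n x t (\<lambda>\<eta>. if \<eta> = \<eta>0 then 1 else 0) \<eta>
      = \<nu> \<eta> * ?In \<eta> - (if \<eta> = \<eta>0 then \<nu> \<eta> * ?Out \<eta> else 0)" for \<eta>
    by (simp add: zrp_generator_def right_diff_distrib sum_subtractf sum_distrib_left)
  then have "0 = (\<Sum>\<eta>\<in>?Z. \<nu> \<eta> * ?In \<eta>) - (\<Sum>\<eta>\<in>?Z. if \<eta> = \<eta>0 then \<nu> \<eta> * ?Out \<eta> else 0)"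
    using gen by (simp add: sum_subtractf)
  also have "(\<Sum>\<eta>\<in>?Z. if \<eta> = \<eta>0 then \<nu> \<eta> * ?Out \<eta> else 0) = \<nu> \<eta>0 * ?Out \<eta>0"
    using \<eta>0 finite_compositions by (simp add: sum.delta')
  finally show ?thesis by simp
qed

text \<open>Maximum principle: where \<open>\<nu> \<le> H w\<close> is attained with equality, the inflow identity for
  \<open>\<nu>\<close> and for \<open>w\<close> forces equality at every predecessor, since the inflow weights are nonnegative.\<close>
lemma zrp_max_ratio_propagates:
  assumes x: "\<forall>i\<in>{1..n}. x i > 0" and t: "t > 0"
    and gen: "\<And>f. (\<Sum>\<eta>\<in>compositions n N. \<nu> \<eta> * zrp_generator n x t f \<eta>) = 0"
    and le: "\<forall>\<eta>\<in>compositions n N. \<nu> \<eta> \<le> H * zrp_weight n x t \<eta>"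
    and \<eta>0: "\<eta>0 \<in> compositions n N" "\<nu> \<eta>0 = H * zrp_weight n x t \<eta>0"
    and step: "zrp_step n N \<eta> \<eta>0"
  shows "\<nu> \<eta> = H * zrp_weight n x t \<eta>"
proof -
  let ?Z = "compositions n N"
  let ?w = "zrp_weight n x t"
  let ?In = "\<lambda>\<eta>. \<Sum>i=1..n. zrp_rate x t \<eta> i * (if zrp_jump n \<eta> i = \<eta>0 then 1 else 0)"
  obtain i where i: "i \<in> {1..n}" "\<eta> i > 0" "zrp_jump n \<eta> i = \<eta>0" and \<eta>: "\<eta> \<in> ?Z"
    using step unfolding zrp_step_def by auto
  have In_nonneg: "?In \<eta>' \<ge> 0" for \<eta>'
    using zrp_rate_nonneg x t by (intro sum_nonneg) auto
  have "(\<Sum>\<eta>'\<in>?Z. (H * ?w \<eta>' - \<nu> \<eta>') * ?In \<eta>') = H * (\<Sum>\<eta>'\<in>?Z. ?w \<eta>' * ?In \<eta>') - (\<Sum>\<eta>'\<in>?Z. \<nu> \<eta>' * ?In \<eta>')"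
    by (simp add: left_diff_distrib sum_subtractf sum_distrib_left mult.assoc)
  also have "\<dots> = 0"
    using zrp_inflow_eq_outflow[OF gen \<eta>0(1)] zrp_inflow_eq_outflow[OF zrp_weight_generator[OF x t] \<eta>0(1)] \<eta>0(2)
    by simp
  finally have sum0: "(\<Sum>\<eta>'\<in>?Z. (H * ?w \<eta>' - \<nu> \<eta>') * ?In \<eta>') = 0" .
  have "\<forall>\<eta>'\<in>?Z. (H * ?w \<eta>' - \<nu> \<eta>') * ?In \<eta>' \<ge> 0"
    using le In_nonneg by auto
  then have "\<forall>\<eta>'\<in>?Z. (H * ?w \<eta>' - \<nu> \<eta>') * ?In \<eta>' = 0"
    using sum_nonneg_eq_0_iff[OF finite_compositions, where f="\<lambda>\<eta>'. (H * ?w \<eta>' - \<nu> \<eta>') * ?In \<eta>'"] sum0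
    by blast
  then have "(H * ?w \<eta> - \<nu> \<eta>) * ?In \<eta> = 0" using \<eta> by blast
  moreover have "?In \<eta> > 0"
  proof -
    have "zrp_rate x t \<eta> i \<le> ?In \<eta>"
      using i member_le_sum[of i "{1..n}" "\<lambda>i. zrp_rate x t \<eta> i * (if zrp_jump n \<eta> i = \<eta>0 then 1 else 0)"]
        zrp_rate_nonneg x t by auto
    moreover have "zrp_rate x t \<eta> i > 0" using zrp_rate_pos x t i by auto
    ultimately show ?thesis by simp
  qed
  ultimately show ?thesis by simp
qed

lemma zrp_generator_kernel:
  assumes n: "n \<ge> 1" and x: "\<forall>i\<in>{1..n}. x i > 0" and t: "t > 0"
    and gen: "\<And>f. (\<Sum>\<eta>\<in>compositions n N. \<nu> \<eta> * zrp_generator n x t f \<eta>) = 0"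
  shows "\<exists>H. \<forall>\<eta>\<in>compositions n N. \<nu> \<eta> = H * zrp_weight n x t \<eta>"
proof -
  let ?Z = "compositions n N"
  let ?w = "zrp_weight n x t"
  have w: "?w \<eta> > 0" for \<eta> using zrp_weight_pos[OF x t] .
  define H where "H = Max ((\<lambda>\<eta>. \<nu> \<eta> / ?w \<eta>) ` ?Z)"
  have fin: "finite ((\<lambda>\<eta>. \<nu> \<eta> / ?w \<eta>) ` ?Z)" by (simp add: finite_compositions)
  obtain \<eta>m where \<eta>m: "\<eta>m \<in> ?Z" "\<nu> \<eta>m / ?w \<eta>m = H"
    using Max_in[OF fin] first_site_config_in_compositions[OF n] unfolding H_def by fastforce
  have le: "\<forall>\<eta>\<in>?Z. \<nu> \<eta> \<le> H * ?w \<eta>"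
  proof
    fix \<eta> assume "\<eta> \<in> ?Z"
    then have "\<nu> \<eta> / ?w \<eta> \<le> H" unfolding H_def by (intro Max_ge[OF fin]) simp
    then show "\<nu> \<eta> \<le> H * ?w \<eta>" using w[of \<eta>] by (simp add: pos_divide_le_eq mult.commute)
  qed
  let ?P = "\<lambda>\<eta>. \<eta> \<in> ?Z \<and> \<nu> \<eta> = H * ?w \<eta>"
  have propagate: "?P a" if "(zrp_step n N)\<^sup>*\<^sup>* a b" "?P b" for a b
    using that
  proof (induction rule: converse_rtranclp_induct)
    case (step a a')
    then show ?case
      using zrp_max_ratio_propagates[OF x t gen le, of a' a] unfolding zrp_step_def by auto
  qed simp
  have "?P \<eta>m" using \<eta>m w[of \<eta>m] by (auto simp: divide_eq_eq)
  then have "?P (first_site_config n N)"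
    by (rule propagate[OF first_site_config_zrp_reaches[OF n \<eta>m(1)]])
  then have "?P \<eta>" if "\<eta> \<in> ?Z" for \<eta>
    by (rule propagate[OF zrp_reaches_first_site_config[OF n that]])
  then show ?thesis by blast
qed

lemma sum_zrp_weight_pos:
  assumes "n \<ge> 1" "\<forall>i\<in>{1..n}. x i > 0" "t > 0"
  shows "(\<Sum>\<eta>\<in>compositions n N. zrp_weight n x t \<eta>) > 0"
  using finite_compositions first_site_config_in_compositions[OF assms(1)] zrp_weight_pos[OF assms(2,3)]
  by (intro sum_pos) blast+

definition zrp_mean_first :: "nat \<Rightarrow> (nat \<Rightarrow> real) \<Rightarrow> real \<Rightarrow> nat \<Rightarrow> real" where
  "zrp_mean_first n x t N =
     (\<Sum>\<eta>\<in>compositions n N. real (\<eta> 1) * zrp_weight n x t \<eta>) / (\<Sum>\<eta>\<in>compositions n N. zrp_weight n x t \<eta>)"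

lemma expected_tail_count:
  assumes st: "stationary n k m x t \<pi>" and j: "1 \<le> j" "j \<le> k + 1"
    and n: "n \<ge> 1" and x: "\<forall>i\<in>{1..n}. x i > 0" and t: "t > 0"
  shows "(\<Sum>c\<in>configs n k m. \<pi> c * real (tail_counts n k j c 1)) = zrp_mean_first n x t (\<Sum>l=j..k. m l)"
proof -
  let ?Z = "compositions n (\<Sum>l=j..k. m l)"
  let ?w = "zrp_weight n x t"
  obtain H where H: "\<forall>\<eta>\<in>?Z. tail_law n k m j \<pi> \<eta> = H * ?w \<eta>"
    using zrp_generator_kernel[OF n x t tail_law_zrp_generator[OF st j]] by blast
  have expect: "(\<Sum>c\<in>configs n k m. \<pi> c * G (tail_counts n k j c)) = H * (\<Sum>\<eta>\<in>?Z. G \<eta> * ?w \<eta>)" for G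
    using H by (simp add: sum_configs_tail_law[OF j(1)] sum_distrib_left mult_ac cong: sum.cong)
  have "1 = (\<Sum>c\<in>configs n k m. \<pi> c * (\<lambda>_. 1) (tail_counts n k j c))"
    using st unfolding stationary_def by simp
  then have "H * (\<Sum>\<eta>\<in>?Z. ?w \<eta>) = 1"
    using expect[of "\<lambda>_. 1"] by simp
  then have "H = 1 / (\<Sum>\<eta>\<in>?Z. ?w \<eta>)"
    using sum_zrp_weight_pos[OF n x t, of "\<Sum>l=j..k. m l"] by (simp add: eq_divide_eq)
  then show ?thesis
    using expect[of "\<lambda>\<eta>. real (\<eta> 1)"] by (simp add: zrp_mean_first_def)
qed

lemma Htilde_eq_sum_zrp_weight: "Htilde n N x t = qfact N t * (\<Sum>\<eta>\<in>compositions n N. zrp_weight n x t \<eta>)"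
  unfolding Htilde_def qmultinom_def zrp_weight_def by (simp add: prod_dividef sum_distrib_left)

lemma Htilde_has_derivative_first:
  assumes n: "n \<ge> 1" and x1: "x 1 \<noteq> 0"
  shows "((\<lambda>y. Htilde n N (x(1 := y)) t) has_real_derivative
           qfact N t * (\<Sum>\<eta>\<in>compositions n N. real (\<eta> 1) * zrp_weight n x t \<eta>) / x 1) (at (x 1))"
proof -
  let ?Z = "compositions n N"
  define K where "K \<eta> = qmultinom n N \<eta> t * (\<Prod>i=2..n. x i ^ \<eta> i)" for \<eta>
  have split_first: "(\<Prod>i=1..n. f i) = f 1 * (\<Prod>i=2..n. f i)" for f :: "nat \<Rightarrow> real"
    using n by (simp add: prod.atLeast_Suc_atMost numeral_2_eq_2)
  have "Htilde n N (x(1 := y)) t = (\<Sum>\<eta>\<in>?Z. K \<eta> * y ^ \<eta> 1)" for y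
    unfolding Htilde_def K_def split_first by (intro sum.cong refl) (simp add: mult_ac)
  moreover have "((\<lambda>y. \<Sum>\<eta>\<in>?Z. K \<eta> * y ^ \<eta> 1) has_real_derivative
      (\<Sum>\<eta>\<in>?Z. K \<eta> * (real (\<eta> 1) * x 1 ^ (\<eta> 1 - Suc 0)))) (at (x 1))"
    by (intro DERIV_sum DERIV_cmult DERIV_pow)
  moreover have "K \<eta> * (real (\<eta> 1) * x 1 ^ (\<eta> 1 - Suc 0)) = qfact N t * (real (\<eta> 1) * zrp_weight n x t \<eta>) / x 1" for \<eta>
  proof -
    have "K \<eta> * x 1 ^ \<eta> 1 = qmultinom n N \<eta> t * (\<Prod>i=1..n. x i ^ \<eta> i)"
      unfolding K_def split_first by (simp add: mult_ac)
    also have "\<dots> = qfact N t * zrp_weight n x t \<eta>"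
      unfolding qmultinom_def zrp_weight_def by (simp add: prod_dividef)
    finally have "K \<eta> * x 1 ^ \<eta> 1 = qfact N t * zrp_weight n x t \<eta>" .
    then show ?thesis using x1 by (cases "\<eta> 1") (simp_all add: field_simps)
  qed
  ultimately show ?thesis
    by (simp add: sum_divide_distrib sum_distrib_left)
qed

lemma deriv_ln_divide:
  fixes f g :: "real \<Rightarrow> real"
  assumes f: "(f has_real_derivative Df) (at a)" and g: "(g has_real_derivative Dg) (at a)"
    and pos: "f a > 0" "g a > 0"
  shows "deriv (\<lambda>y. ln (f y / g y)) a = Df / f a - Dg / g a"
proof (rule DERIV_imp_deriv)
  have "((\<lambda>y. ln (f y / g y)) has_real_derivative (1 / (f a / g a)) * ((Df * g a - f a * Dg) / (g a * g a))) (at a)"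
    by (rule DERIV_chain2[OF DERIV_ln_divide DERIV_divide[OF f g]]) (use pos in simp_all)
  then show "((\<lambda>y. ln (f y / g y)) has_real_derivative Df / f a - Dg / g a) (at a)"
    by (rule DERIV_cong) (use pos in \<open>simp add: field_simps\<close>)
qed

lemma x_deriv_ln_Htilde_ratio:
  assumes n: "n \<ge> 1" and x: "\<forall>i\<in>{1..n}. x i > 0" and t: "t > 0"
  shows "x 1 * deriv (\<lambda>y. ln (Htilde n N (x(1 := y)) t / Htilde n N' (x(1 := y)) t)) (x 1)
       = zrp_mean_first n x t N - zrp_mean_first n x t N'"
proof -
  let ?E = "\<lambda>N. \<Sum>\<eta>\<in>compositions n N. real (\<eta> 1) * zrp_weight n x t \<eta>"
  have x1: "x 1 > 0" using x n by auto
  have H_pos: "Htilde n N (x(1 := x 1)) t > 0" for N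
    using qfact_pos[OF t] sum_zrp_weight_pos[OF n x t] by (simp add: Htilde_eq_sum_zrp_weight)
  have log_deriv: "qfact N t * ?E N / x 1 / Htilde n N (x(1 := x 1)) t = zrp_mean_first n x t N / x 1" for N
    using qfact_pos[OF t, of N] by (simp add: Htilde_eq_sum_zrp_weight zrp_mean_first_def)
  have "deriv (\<lambda>y. ln (Htilde n N (x(1 := y)) t / Htilde n N' (x(1 := y)) t)) (x 1)
      = qfact N t * ?E N / x 1 / Htilde n N (x(1 := x 1)) t
        - qfact N' t * ?E N' / x 1 / Htilde n N' (x(1 := x 1)) t"
    using x1 by (intro deriv_ln_divide Htilde_has_derivative_first[OF n] H_pos) simp_all
  also have "\<dots> = zrp_mean_first n x t N / x 1 - zrp_mean_first n x t N' / x 1"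
    by (simp only: log_deriv)
  finally show ?thesis
    using x1 by (simp add: right_diff_distrib)
qed

theorem theorem7:
  fixes n k :: nat and m :: "nat \<Rightarrow> nat" and x :: "nat \<Rightarrow> real" and t :: real
    and \<pi> :: "(nat \<times> nat \<Rightarrow> nat) \<Rightarrow> real" and j :: nat
  defines "M \<equiv> (\<lambda>i. \<Sum>l=i..k. m l)"
  assumes "\<forall>i\<in>{1..k}. m i > 0"
    and "n \<ge> 1"
    and "\<forall>i\<in>{1..n}. x i > 0"
    and "t > 0"
    and "stationary n k m x t \<pi>"
    and "j \<in> {1..k}"
  shows "(\<Sum>c\<in>configs n k m. \<pi> c * real (c (1, j)))
       = x 1 * deriv (\<lambda>y. ln (Htilde n (M j) (x(1 := y)) t / Htilde n (M (j + 1)) (x(1 := y)) t)) (x 1)"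
proof -
  note n = assms(3) and x = assms(4) and t = assms(5) and st = assms(6) and jk = assms(7)
  have "(\<Sum>c\<in>configs n k m. \<pi> c * real (c (1, j)))
      = (\<Sum>c\<in>configs n k m. \<pi> c * real (tail_counts n k j c 1))
        - (\<Sum>c\<in>configs n k m. \<pi> c * real (tail_counts n k (j + 1) c 1))"
    using n jk by (simp add: tail_counts_Suc distrib_left sum.distrib)
  also have "\<dots> = zrp_mean_first n x t (M j) - zrp_mean_first n x t (M (j + 1))"
    using expected_tail_count[OF st _ _ n x t, of j] expected_tail_count[OF st _ _ n x t, of "j + 1"] jk
    unfolding M_def by simp
  also have "\<dots> = x 1 * deriv (\<lambda>y. ln (Htilde n (M j) (x(1 := y)) t / Htilde n (M (j + 1)) (x(1 := y)) t)) (x 1)"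
    by (rule x_deriv_ln_Htilde_ratio[OF n x t, symmetric])
  finally show ?thesis .
qed

end
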